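(* Let $n\ge1$ and $\pi\in\mathfrak B_n$ with $\pi_1>0$ (resp. $\pi_1<0$). Then $\mathrm{run}_B(\sigma)\ge\mathrm{leaf}(T_\pi)$ for every $T_\sigma\in\mathrm{Orb}^*(T_\pi)$, and there is a unique tree $T_{\pi^*}\in\mathrm{Orb}^*(T_\pi)$, with $\pi^*_1>0$ (resp. $\pi^*_1<0$), such that $\mathrm{run}_B(\pi^* )=\mathrm{leaf}(T_\pi)$.
   Context: $\mathfrak B_n$ is the set of signed permutations $\pi=\pi_1\cdots\pi_n$ (words over $\{\pm1,\dots,\pm n\}$ with $|\pi_1|,\dots,|\pi_n|$ a permutation of $[n]$), compared as integers; set $\pi_0=0$. $\mathrm{run}_B(\pi)$ is $1$ plus the number of $i\in\{1,\dots,n-1\}$ with $\pi_{i-1}<\pi_i>\pi_{i+1}$ or $\pi_{i-1}>\pi_i<\pi_{i+1}$. Trees are rooted binary trees with each child designated left or right. A min–max tree is labeled bijectively by a totally ordered set so that each node's label is the minimum or maximum of its subtree's labels. A node with a child is inner; an inner node is a min-node (resp. max-node) if its label is the minimum (resp. maximum) of its subtree. An HR-tree is a min–max tree in which every inner node $s$ has a nonempty right subtree containing the maximum label of the subtree of $s$ if $s$ is a min-node, the minimum if $s$ is a max-node. The reading word is the in-order reading $w(T)=w(L)\,\ell_{\mathrm{root}}\,w(R)$. $\mathcal{BHR}_n$ is the set of HR-trees with label set $\{0,s_1,\dots,s_n\}$, $s_i\in\{i,-i\}$, with $0$ the first letter of $w(T)$; $T\mapsto w(T)=0\pi_1\cdots\pi_n$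 is a bijection $\mathcal{BHR}_n\to\mathfrak B_n$ and $T_\pi$ is the tree with $w(T_\pi)=0\pi$. $\mathrm{leaf}(T)$ is the number of leaves of $T$ (the node $0$ included if it is a leaf). Modified HR-action: for $i\in[n]$ and $T_\pi\in\mathcal{BHR}_n$, let $v$ be the node labeled $\pi_i$. If $v$ is a leaf, or if the node labeled $0$ is a leaf whose parent is $v$, then $\widehat\psi_i(T_\pi)=T_\pi$. Otherwise let $R$ consist of $\pi_i$ and the labels of the right subtree of $v$; relabel $v$ and its right subtree, keeping the shape, so that $v$ receives $\max R$ if $v$ is a min-node and $\min R$ if $v$ is a max-node, the right subtree nodes receiving the remaining elements of $R$ by the order-preserving bijection from their old labels; other labels unchanged. The $\widehat\psi_i$ are commuting involutions and $\mathrm{Orb}^*(T)$ is the set of trees obtained from $T$ by compositions of the $\widehat\psi_i$, $i\in[n]$. *)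

theory Defs
  imports Main "HOL-Library.Tree"
begin

(* Trees: HOL-Library binary trees; Leaf is the empty tree, a node is Node l x r.
   A node of the paper is a "leaf" iff it is Node Leaf x Leaf. Labels are integers. *)

definition signed_perm :: "nat \<Rightarrow> int list \<Rightarrow> bool" where
  "signed_perm n \<pi> \<longleftrightarrow> distinct (map abs \<pi>) \<and> set (map abs \<pi>) = {1..int n}"

(* run_B(pi): with pi_0 = 0, w = 0 # pi, so w ! i = pi_i *)
definition runB :: "int list \<Rightarrow> nat" where
  "runB \<pi> = (let w = 0 # \<pi>; n = length \<pi> in
     1 + card {i \<in> {1..n-1}. (w!(i-1) < w!i \<and> w!i > w!(i+1)) \<or> (w!(i-1) > w!i \<and> w!i < w!(i+1))})"

fun leaf_count :: "'a tree \<Rightarrow> nat" where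
  "leaf_count Leaf = 0"
| "leaf_count (Node l x r) = (if l = Leaf \<and> r = Leaf then 1 else leaf_count l + leaf_count r)"

fun minmax_nodes :: "int tree \<Rightarrow> bool" where
  "minmax_nodes Leaf = True"
| "minmax_nodes (Node l x r) =
     ((x = Min (set_tree (Node l x r)) \<or> x = Max (set_tree (Node l x r)))
      \<and> minmax_nodes l \<and> minmax_nodes r)"

definition minmax_tree :: "int tree \<Rightarrow> bool" where
  "minmax_tree t \<longleftrightarrow> distinct (inorder t) \<and> minmax_nodes t"

fun hr_nodes :: "int tree \<Rightarrow> bool" where
  "hr_nodes Leaf = True"
| "hr_nodes (Node l x r) =
     ((((l \<noteq> Leaf \<or> r \<noteq> Leaf) \<longrightarrow>
        r \<noteq> Leaf
        \<and> (x = Min (set_tree (Node l x r)) \<longrightarrow> Max (set_tree (Node l x r)) \<in> set_tree r)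
        \<and> (x = Max (set_tree (Node l x r)) \<longrightarrow> Min (set_tree (Node l x r)) \<in> set_tree r)))
     \<and> hr_nodes l \<and> hr_nodes r)"

definition hr_tree :: "int tree \<Rightarrow> bool" where
  "hr_tree t \<longleftrightarrow> minmax_tree t \<and> hr_nodes t"

definition relabel_node :: "int tree \<Rightarrow> int \<Rightarrow> int tree \<Rightarrow> int tree" where
  "relabel_node l y r =
     (let R = insert y (set_tree r);
          y' = (if y = Min (set_tree (Node l y r)) then Max R else Min R);
          new = sorted_list_of_set (R - {y'});
          f = (\<lambda>z. new ! card {w \<in> set_tree r. w < z})
      in Node l y' (map_tree f r))"

fun psi_at :: "int \<Rightarrow> int tree \<Rightarrow> int tree" where
  "psi_at x Leaf = Leaf"
| "psi_at x (Node l y r) =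
     (if y = x then
        (if (l = Leaf \<and> r = Leaf) \<or> l = Node Leaf 0 Leaf \<or> r = Node Leaf 0 Leaf
         then Node l y r else relabel_node l y r)
      else Node (psi_at x l) y (psi_at x r))"

(* psi_i (T_pi) with w(T_pi) = 0 pi, i in [n] *)
definition psi :: "nat \<Rightarrow> int tree \<Rightarrow> int tree" where
  "psi i t = psi_at (tl (inorder t) ! (i - 1)) t"

inductive_set orb :: "nat \<Rightarrow> int tree \<Rightarrow> int tree set" for n T where
  base: "T \<in> orb n T"
| step: "S \<in> orb n T \<Longrightarrow> i \<in> {1..n} \<Longrightarrow> psi i S \<in> orb n T"

end

theory Submission
  imports Defs
begin

text \<open>Reading an HR-tree in order, each step goes up or down according to the min/max type
  of the node it enters or leaves, so \<open>run\<^sub>B(\<sigma>) - 1\<close> counts the direction changes of a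
  word determined by the shape and the node types of \<open>T\<^sub>\<sigma>\<close>; every leaf but one forces
  such a change. The action \<open>\<psi>\<^sub>i\<close> keeps the labels, the shape and, at every node, the
  ranks of the labels of its left subtree, and flips the type of the node \<open>\<pi>\<^sub>i\<close> only
  (when it acts at all). So a tree of the orbit is determined by its types, and a tree attaining
  the bound is built bottom-up by giving every node the type that avoids a change. Once the
  first direction is fixed this type is forced, and the only nodes that cannot be flipped are
  leaves and the nodes at \<open>0\<close>, where the first direction leaves no choice anyway.\<close>

section \<open>Direction words\<close>

fun dirs :: "'a::linorder list \<Rightarrow> bool list" where
  "dirs (a # b # xs) = (a < b) # dirs (b # xs)"
| "dirs _ = []"

fun changes :: "'a list \<Rightarrow> nat" where
  "changes (a # b # xs) = (if a \<noteq> b then 1 else 0) + changes (b # xs)"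
| "changes _ = 0"

definition turning_point :: "'a::linorder list \<Rightarrow> nat \<Rightarrow> bool" where
  "turning_point w i \<longleftrightarrow>
     (w!(i-1) < w!i \<and> w!i > w!(i+1)) \<or> (w!(i-1) > w!i \<and> w!i < w!(i+1))"

lemma card_turning_points:
  "distinct w \<Longrightarrow> card {i \<in> {1..length w - 2}. turning_point w i} = changes (dirs w)"
proof (induction w rule: dirs.induct)
  case (1 a b xs)
  show ?case
  proof (cases xs)
    case (Cons c ys)
    let ?w = "a # b # xs" and ?w' = "b # xs"
    let ?T = "\<lambda>w. {i \<in> {1..length w - 2}. turning_point w i}"
    have shift: "turning_point ?w (Suc i) = turning_point ?w' i" if "i \<ge> 1" for i
      using that by (cases i) (auto simp: turning_point_def)
    have split: "?T ?w = (if turning_point ?w 1 then {1} else {}) \<union> Suc ` ?T ?w'"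
    proof (rule set_eqI)
      fix j
      show "j \<in> ?T ?w \<longleftrightarrow> j \<in> (if turning_point ?w 1 then {1} else {}) \<union> Suc ` ?T ?w'"
      proof (cases "j \<le> 1")
        case False
        then obtain i where "j = Suc i" "i \<ge> 1" by (cases j) auto
        then show ?thesis using shift[of i] by (auto simp: Cons)
      qed (cases j; auto simp: Cons)
    qed
    have "card (?T ?w) = (if turning_point ?w 1 then 1 else 0) + card (?T ?w')"
      unfolding split by (subst card_Un_disjoint) (auto simp: card_image)
    moreover have "turning_point ?w 1 \<longleftrightarrow> (a < b) \<noteq> (b < c)"
      using "1.prems" by (auto simp: turning_point_def Cons)
    ultimately show ?thesis using 1 by (simp add: Cons)
  qed simp
qed auto

lemma runB_eq_changes: "distinct (0 # \<pi>) \<Longrightarrow> runB \<pi> = changes (dirs (0 # \<pi>)) + 1"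
  using card_turning_points[of "0 # \<pi>"] unfolding runB_def turning_point_def Let_def by simp

lemma changes_append:
  "changes (xs @ ys) =
     changes xs + changes ys + (if xs \<noteq> [] \<and> ys \<noteq> [] \<and> last xs \<noteq> hd ys then 1 else 0)"
proof (induction xs rule: changes.induct)
  case ("2_2" a) then show ?case by (cases ys) auto
qed (auto split: list.splits)

lemma changes_Cons: "changes (a # ys) = changes ys + (if ys \<noteq> [] \<and> a \<noteq> hd ys then 1 else 0)"
  using changes_append[of "[a]" ys] by simp

lemma dirs_append_Cons:
  "dirs (u @ x # v) =
     (if u = [] then [] else dirs u @ [last u < x]) @ (if v = [] then [] else (x < hd v) # dirs v)"
  by (induction u rule: dirs.induct) (auto simp: neq_Nil_conv)

definition starts_with :: "'a \<Rightarrow> 'a list \<Rightarrow> bool" where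
  "starts_with a xs \<longleftrightarrow> xs = [] \<or> hd xs = a"

definition ends_with :: "'a \<Rightarrow> 'a list \<Rightarrow> bool" where
  "ends_with a xs \<longleftrightarrow> xs = [] \<or> last xs = a"

lemma starts_with_dirs_zero_Cons:
  "\<sigma> \<noteq> [] \<Longrightarrow> starts_with b (dirs (0 # \<sigma>)) \<longleftrightarrow> b = (0 < \<sigma> ! 0)"
  by (cases \<sigma>) (auto simp: starts_with_def)

section \<open>Type trees\<close>

definition shape :: "'a tree \<Rightarrow> unit tree" where
  "shape t = map_tree (\<lambda>_. ()) t"

lemma shape_simps [simp]: "shape Leaf = Leaf" "shape (Node l x r) = Node (shape l) () (shape r)"
  by (simp_all add: shape_def)

lemma shape_eq_Leaf_iff [simp]: "shape t = Leaf \<longleftrightarrow> t = Leaf"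
  by (simp add: shape_def)

lemmas Leaf_eq_shape_iff [simp] = shape_eq_Leaf_iff[THEN eq_iff_swap]

lemma shape_map_tree [simp]: "shape (map_tree f t) = shape t"
  by (induction t) auto

lemma leaf_count_map_tree [simp]: "leaf_count (map_tree f t) = leaf_count t"
  by (induction t) auto

lemma leaf_count_shape_eq: "shape s = shape t \<Longrightarrow> leaf_count s = leaf_count t"
  by (metis shape_def leaf_count_map_tree)

text \<open>A type tree marks each node of an HR-tree as a min-node (\<open>True\<close>; leaves count as
  min-nodes) or a max-node. The in-order reading goes up when entering a max-node from its left
  subtree, and when leaving a min-node into its right subtree; \<open>tdirs\<close> is the resulting
  up/down word.\<close>

fun tdirs :: "bool tree \<Rightarrow> bool list" where
  "tdirs Leaf = []"
| "tdirs (Node l m r) =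
     (if l = Leaf then [] else tdirs l @ [\<not> m]) @ (if r = Leaf then [] else m # tdirs r)"

fun wf_types :: "bool tree \<Rightarrow> bool" where
  "wf_types Leaf = True"
| "wf_types (Node l m r) \<longleftrightarrow> (r = Leaf \<longrightarrow> l = Leaf \<and> m) \<and> wf_types l \<and> wf_types r"

definition tight :: "bool tree \<Rightarrow> bool" where
  "tight t \<longleftrightarrow> changes (tdirs t) + 1 = leaf_count t"

lemma leaf_count_le_changes:
  "wf_types t \<Longrightarrow> t \<noteq> Leaf \<Longrightarrow> leaf_count t \<le> changes (tdirs t) + 1"
proof (induction t)
  case (Node l m r)
  then show ?case
    by (cases "l = Leaf"; cases "r = Leaf") (auto simp: changes_append changes_Cons)
qed simp

lemma tight_Node_iff:
  assumes "wf_types (Node l m r)" "r \<noteq> Leaf"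
  shows "tight (Node l m r) \<longleftrightarrow>
    (l \<noteq> Leaf \<longrightarrow> tight l \<and> ends_with (\<not> m) (tdirs l)) \<and> tight r \<and> starts_with m (tdirs r)"
  using assms leaf_count_le_changes[of l] leaf_count_le_changes[of r]
  by (cases "l = Leaf")
     (auto simp: tight_def starts_with_def ends_with_def changes_append changes_Cons)

lemma tight_single: "tight (Node Leaf True Leaf)"
  by (simp add: tight_def)

lemma starts_with_tdirs_Node:
  "r \<noteq> Leaf \<Longrightarrow> starts_with s (tdirs (Node l m r)) \<longleftrightarrow>
     (if l = Leaf then m = s else if tdirs l = [] then m = (\<not> s) else starts_with s (tdirs l))"
  by (auto simp: starts_with_def hd_append)

definition tight_root_type :: "bool tree \<Rightarrow> bool \<Rightarrow> bool" where
  "tight_root_type l s = (if l = Leaf then s else if tdirs l = [] then \<not> s else \<not> last (tdirs l))"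

lemma tight_Node_starts_with_iff:
  assumes "wf_types (Node l m r)" "r \<noteq> Leaf"
  shows "tight (Node l m r) \<and> starts_with s (tdirs (Node l m r)) \<longleftrightarrow>
    (l \<noteq> Leaf \<longrightarrow> tight l \<and> starts_with s (tdirs l)) \<and> m = tight_root_type l s
    \<and> tight r \<and> starts_with m (tdirs r)"
  using tight_Node_iff[OF assms] starts_with_tdirs_Node[OF assms(2)]
  by (auto simp: tight_root_type_def ends_with_def starts_with_def)

lemma starts_with_tdirs_left:
  "r \<noteq> Leaf \<Longrightarrow> starts_with s (tdirs (Node l m r)) \<Longrightarrow> starts_with s (tdirs l)"
  by (auto simp: starts_with_def hd_append split: if_splits)

lemma tight_root_type_forced:
  "r \<noteq> Leaf \<Longrightarrow> starts_with s (tdirs (Node l m r)) \<Longrightarrow> l = Leaf \<or> tdirs l = []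
   \<Longrightarrow> tight_root_type l s = m"
  using starts_with_tdirs_Node by (auto simp: tight_root_type_def)

lemma tight_unique:
  "wf_types s \<Longrightarrow> wf_types t \<Longrightarrow> shape s = shape t \<Longrightarrow> tight s \<Longrightarrow> tight t
   \<Longrightarrow> starts_with b (tdirs s) \<Longrightarrow> starts_with b (tdirs t) \<Longrightarrow> s = t"
proof (induction s arbitrary: t b)
  case (Node l1 m1 r1)
  obtain l2 m2 r2 where t: "t = Node l2 m2 r2"
    using Node.prems(3) by (cases t) auto
  show ?case
  proof (cases "r1 = Leaf")
    case True
    then show ?thesis using Node.prems t by auto
  next
    case r1: False
    then have r2: "r2 \<noteq> Leaf" using Node.prems(3) t by auto
    have wf: "wf_types l1" "wf_types r1" "wf_types l2" "wf_types r2"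
      and shapes: "shape l1 = shape l2" "shape r1 = shape r2"
      using Node.prems t by auto
    note char1 = tight_Node_starts_with_iff[OF Node.prems(1) r1, of b]
    note char2 = tight_Node_starts_with_iff[OF Node.prems(2)[unfolded t] r2, of b]
    have "l1 = l2"
      using Node.IH(1)[of l2 b] char1 char2 Node.prems(4-7) t wf shapes by (cases "l1 = Leaf") auto
    moreover have "m1 = m2"
      using char1 char2 Node.prems(4-7) t calculation by simp
    moreover have "r1 = r2"
    proof -
      have "tight r1" "starts_with m1 (tdirs r1)" "tight r2" "starts_with m1 (tdirs r2)"
        using char1 char2 Node.prems(4-7) t calculation by auto
      then show ?thesis
        using Node.IH(2)[OF wf(2,4) shapes(2)] by blast
    qed
    ultimately show ?thesis using t by simp
  qed
qed auto

section \<open>Order-preserving relabellings\<close>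

definition rank :: "'a::linorder set \<Rightarrow> 'a \<Rightarrow> nat" where
  "rank X a = card {b \<in> X. b < a}"

lemma strict_mono_on_rank: "finite X \<Longrightarrow> strict_mono_on X (rank X)"
  unfolding rank_def by (rule strict_mono_onI) (auto intro!: psubset_card_mono)

lemma rank_less_card: "finite X \<Longrightarrow> a \<in> X \<Longrightarrow> rank X a < card X"
  unfolding rank_def by (rule psubset_card_mono) auto

lemma rank_image:
  assumes "strict_mono_on X f" "finite X" "a \<in> X"
  shows "rank (f ` X) (f a) = rank X a"
proof -
  have "{b \<in> f ` X. b < f a} = f ` {b \<in> X. b < a}"
    using strict_mono_on_less[OF assms(1) _ assms(3)] by auto
  moreover have "inj_on f {b \<in> X. b < a}"
    using strict_mono_on_imp_inj_on[OF assms(1)] by (rule inj_on_subset) auto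
  ultimately show ?thesis unfolding rank_def by (simp add: card_image)
qed

lemma rank_relabel:
  fixes A B :: "'a::linorder set"
  assumes "finite A" "finite B" "card A = card B"
  defines "g \<equiv> \<lambda>a. sorted_list_of_set B ! rank A a"
  shows "strict_mono_on A g" "g ` A = B"
proof -
  let ?ys = "sorted_list_of_set B"
  have len: "rank A a < length ?ys" if "a \<in> A" for a
    using rank_less_card[OF assms(1) that] assms by simp
  show mono: "strict_mono_on A g"
  proof (rule strict_mono_onI)
    fix a b assume "a \<in> A" "b \<in> A" "a < b"
    then show "g a < g b"
      using strict_mono_onD[OF strict_mono_on_rank[OF assms(1)]] len
      by (simp add: g_def sorted_wrt_nth_less)
  qed
  have "g ` A \<subseteq> B"
    using nth_mem[OF len] assms(2) by (auto simp: g_def)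
  moreover have "card (g ` A) = card B"
    using card_image[OF strict_mono_on_imp_inj_on[OF mono]] assms(3) by simp
  ultimately show "g ` A = B"
    using assms(2) by (simp add: card_subset_eq)
qed

lemma strict_mono_on_Min_image:
  fixes f :: "'a::linorder \<Rightarrow> 'b::linorder"
  assumes f: "strict_mono_on S f" and S: "finite S" "S \<noteq> {}"
  shows "Min (f ` S) = f (Min S)"
proof (rule Min_eqI)
  fix y assume "y \<in> f ` S"
  then show "f (Min S) \<le> y"
    using strict_mono_on_leD[OF f Min_in[OF S] _ Min_le[OF S(1)]] by auto
qed (use S in auto)

lemma strict_mono_on_Max_image:
  fixes f :: "'a::linorder \<Rightarrow> 'b::linorder"
  assumes f: "strict_mono_on S f" and S: "finite S" "S \<noteq> {}"
  shows "Max (f ` S) = f (Max S)"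
proof (rule Max_eqI)
  fix y assume "y \<in> f ` S"
  then show "y \<le> f (Max S)"
    using strict_mono_on_leD[OF f _ Max_in[OF S] Max_ge[OF S(1)]] by auto
qed (use S in auto)

lemma strict_mono_on_Min_iff:
  fixes f :: "'a::linorder \<Rightarrow> 'b::linorder"
  assumes "strict_mono_on S f" "finite S" "x \<in> S"
  shows "f x = Min (f ` S) \<longleftrightarrow> x = Min S"
proof -
  have "S \<noteq> {}" using assms(3) by auto
  then show ?thesis
    using strict_mono_on_Min_image[OF assms(1,2)] strict_mono_on_eq[OF assms(1,3) Min_in[OF assms(2)]]
    by auto
qed

lemma strict_mono_on_Max_iff:
  fixes f :: "'a::linorder \<Rightarrow> 'b::linorder"
  assumes "strict_mono_on S f" "finite S" "x \<in> S"
  shows "f x = Max (f ` S) \<longleftrightarrow> x = Max S"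
proof -
  have "S \<noteq> {}" using assms(3) by auto
  then show ?thesis
    using strict_mono_on_Max_image[OF assms(1,2)] strict_mono_on_eq[OF assms(1,3) Max_in[OF assms(2)]]
    by auto
qed

section \<open>HR-trees\<close>

lemma hr_tree_Node_iff:
  "hr_tree (Node l x r) \<longleftrightarrow> hr_tree l \<and> hr_tree r \<and> x \<notin> set_tree l \<and> x \<notin> set_tree r
   \<and> set_tree l \<inter> set_tree r = {}
   \<and> (x = Min (set_tree (Node l x r)) \<or> x = Max (set_tree (Node l x r)))
   \<and> ((l \<noteq> Leaf \<or> r \<noteq> Leaf) \<longrightarrow> r \<noteq> Leaf
        \<and> (x = Min (set_tree (Node l x r)) \<longrightarrow> Max (set_tree (Node l x r)) \<in> set_tree r)
        \<and> (x = Max (set_tree (Node l x r)) \<longrightarrow> Min (set_tree (Node l x r)) \<in> set_tree r))"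
proof -
  have "distinct (inorder (Node l x r)) \<longleftrightarrow> distinct (inorder l) \<and> distinct (inorder r)
     \<and> x \<notin> set_tree l \<and> x \<notin> set_tree r \<and> set_tree l \<inter> set_tree r = {}"
    by (auto simp flip: set_inorder)
  then show ?thesis
    unfolding hr_tree_def minmax_tree_def minmax_nodes.simps(2) hr_nodes.simps(2) by blast
qed

lemma hr_tree_root_less_iff:
  assumes "hr_tree (Node l x r)" "a \<in> set_tree l \<union> set_tree r"
  shows "x < a \<longleftrightarrow> x = Min (set_tree (Node l x r))"
proof -
  let ?S = "set_tree (Node l x r)"
  have "a \<in> ?S" "x \<noteq> a" "x = Min ?S \<or> x = Max ?S"
    using assms by (auto simp: hr_tree_Node_iff)
  moreover have "Min ?S \<le> a" "a \<le> Max ?S"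
    using \<open>a \<in> ?S\<close> by (simp_all del: tree.set)
  ultimately show ?thesis
    by (metis order.not_eq_order_implies_strict not_less_iff_gr_or_eq)
qed

fun type_tree :: "'a::linorder tree \<Rightarrow> bool tree" where
  "type_tree Leaf = Leaf"
| "type_tree (Node l x r) = Node (type_tree l) (x = Min (set_tree (Node l x r))) (type_tree r)"

lemma shape_type_tree [simp]: "shape (type_tree t) = shape t"
  by (induction t) auto

lemma type_tree_eq_Leaf_iff [simp]: "type_tree t = Leaf \<longleftrightarrow> t = Leaf"
  by (cases t) auto

lemma wf_types_type_tree: "hr_tree t \<Longrightarrow> wf_types (type_tree t)"
  by (induction t) (auto simp: hr_tree_Node_iff)

lemma dirs_inorder: "hr_tree t \<Longrightarrow> dirs (inorder t) = tdirs (type_tree t)"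
proof (induction t)
  case (Node l x r)
  define m where "m \<longleftrightarrow> x = Min (set_tree (Node l x r))"
  have hr: "hr_tree l" "hr_tree r" "x \<notin> set_tree l"
    using Node.prems by (simp_all add: hr_tree_Node_iff)
  have "last (inorder l) < x \<longleftrightarrow> \<not> m" if "l \<noteq> Leaf"
  proof -
    have "last (inorder l) \<in> set_tree l"
      using that last_in_set[of "inorder l"] by simp
    then show ?thesis
      using hr_tree_root_less_iff[OF Node.prems, of "last (inorder l)"] hr(3) m_def
      by (metis Un_iff not_less_iff_gr_or_eq)
  qed
  moreover have "x < hd (inorder r) \<longleftrightarrow> m" if "r \<noteq> Leaf"
  proof -
    have "hd (inorder r) \<in> set_tree r"
      using that hd_in_set[of "inorder r"] by simp
    then show ?thesis
      using hr_tree_root_less_iff[OF Node.prems, of "hd (inorder r)"] m_def by blast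
  qed
  moreover have "type_tree (Node l x r) = Node (type_tree l) m (type_tree r)"
    by (simp add: m_def)
  ultimately show ?case
    using Node.IH hr by (simp add: dirs_append_Cons)
qed simp

fun left_ranks :: "'a::linorder tree \<Rightarrow> nat set tree" where
  "left_ranks Leaf = Leaf"
| "left_ranks (Node l x r) =
     Node (left_ranks l) (rank (set_tree (Node l x r)) ` set_tree l) (left_ranks r)"

text \<open>The type of the root fixes its label as the minimum or the maximum, and the ranks of the
  left subtree fix how the other labels split between the subtrees.\<close>

lemma hr_tree_eqI:
  "hr_tree s \<Longrightarrow> hr_tree t \<Longrightarrow> set_tree s = set_tree t \<Longrightarrow> left_ranks s = left_ranks t
   \<Longrightarrow> type_tree s = type_tree t \<Longrightarrow> s = t"
proof (induction s arbitrary: t)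
  case Leaf
  then show ?case by simp
next
  case (Node l1 x1 r1)
  obtain l2 x2 r2 where t: "t = Node l2 x2 r2"
    using Node.prems(3) by (cases t) auto
  let ?X = "set_tree (Node l1 x1 r1)"
  have X: "set_tree (Node l2 x2 r2) = ?X"
    using Node.prems t by simp
  have hr1: "hr_tree l1" "hr_tree r1" "x1 \<notin> set_tree l1" "x1 \<notin> set_tree r1"
      "set_tree l1 \<inter> set_tree r1 = {}" "x1 = Min ?X \<or> x1 = Max ?X"
    and hr2: "hr_tree l2" "hr_tree r2" "x2 \<notin> set_tree l2" "x2 \<notin> set_tree r2"
      "set_tree l2 \<inter> set_tree r2 = {}" "x2 = Min ?X \<or> x2 = Max ?X"
    using Node.prems(1,2) X unfolding t hr_tree_Node_iff by metis+
  have "x1 = Min ?X \<longleftrightarrow> x2 = Min ?X"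
    using Node.prems(5) X t by simp
  then have x: "x1 = x2"
    using hr1(6) hr2(6) by metis
  have ranks: "rank ?X ` set_tree l1 = rank ?X ` set_tree l2"
    using Node.prems(4) X t by simp
  have inj: "inj_on (rank ?X) ?X"
    by (simp add: strict_mono_on_imp_inj_on strict_mono_on_rank del: tree.set)
  have sub: "set_tree l1 \<subseteq> ?X" "set_tree l2 \<subseteq> ?X"
    using X by auto
  have "a \<in> set_tree l1 \<longleftrightarrow> a \<in> set_tree l2" if "a \<in> ?X" for a
    using inj_on_image_mem_iff[OF inj that sub(1)] inj_on_image_mem_iff[OF inj that sub(2)] ranks
    by simp
  then have sl: "set_tree l1 = set_tree l2"
    using sub by blast
  have "set_tree r1 = set_tree r2"
    using hr1 hr2 X sl x by auto
  then show ?case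
    using Node.IH[of l2] Node.IH[of r2] Node.prems(4,5) hr1 hr2 sl x t by simp
qed

lemma type_tree_map_tree:
  "strict_mono_on (set_tree t) f \<Longrightarrow> type_tree (map_tree f t) = type_tree t"
proof (induction t)
  case (Node l x r)
  have "strict_mono_on (set_tree l) f" "strict_mono_on (set_tree r) f"
    using Node.prems by (auto elim: monotone_on_subset)
  then show ?case
    using Node strict_mono_on_Min_iff[OF Node.prems, of x] by (simp add: image_Un tree.set_map)
qed simp

lemma left_ranks_map_tree:
  "strict_mono_on (set_tree t) f \<Longrightarrow> left_ranks (map_tree f t) = left_ranks t"
proof (induction t)
  case (Node l x r)
  have "strict_mono_on (set_tree l) f" "strict_mono_on (set_tree r) f"
    using Node.prems by (auto elim: monotone_on_subset)
  moreover have "rank (f ` set_tree (Node l x r)) ` f ` set_tree l = rank (set_tree (Node l x r)) ` set_tree l"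
    using rank_image[OF Node.prems] by (force simp: image_image)
  ultimately show ?case
    using Node.IH by (simp add: image_Un tree.set_map)
qed simp

lemma minmax_nodes_map_tree:
  "strict_mono_on (set_tree t) f \<Longrightarrow> minmax_nodes (map_tree f t) \<longleftrightarrow> minmax_nodes t"
proof (induction t)
  case (Node l x r)
  have "strict_mono_on (set_tree l) f" "strict_mono_on (set_tree r) f"
    using Node.prems by (auto elim: monotone_on_subset)
  then show ?case
    using Node strict_mono_on_Min_iff[OF Node.prems, of x] strict_mono_on_Max_iff[OF Node.prems, of x]
    by (simp add: image_Un tree.set_map)
qed simp

lemma hr_nodes_map_tree:
  "strict_mono_on (set_tree t) f \<Longrightarrow> hr_nodes (map_tree f t) \<longleftrightarrow> hr_nodes t"
proof (induction t)
  case (Node l x r)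
  let ?S = "set_tree (Node l x r)"
  have mono: "strict_mono_on (set_tree l) f" "strict_mono_on (set_tree r) f"
    using Node.prems by (auto elim: monotone_on_subset)
  have inj: "inj_on f ?S"
    using Node.prems by (rule strict_mono_on_imp_inj_on)
  have sub: "set_tree r \<subseteq> ?S"
    by auto
  have MinMax: "Min ?S \<in> ?S" "Max ?S \<in> ?S"
    by (simp_all del: tree.set)
  then have mem: "f (Min ?S) \<in> f ` set_tree r \<longleftrightarrow> Min ?S \<in> set_tree r"
    "f (Max ?S) \<in> f ` set_tree r \<longleftrightarrow> Max ?S \<in> set_tree r"
    using inj_on_image_mem_iff[OF inj _ sub] by blast+
  have image: "set_tree (Node (map_tree f l) (f x) (map_tree f r)) = f ` ?S"
    by (simp add: tree.set_map image_Un)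
  have "x \<in> ?S" "?S \<noteq> {}"
    by simp_all
  show ?case
    unfolding tree.map hr_nodes.simps image eq_map_tree_Leaf tree.set_map
      strict_mono_on_Min_image[OF Node.prems finite_set_tree \<open>?S \<noteq> {}\<close>]
      strict_mono_on_Max_image[OF Node.prems finite_set_tree \<open>?S \<noteq> {}\<close>]
      strict_mono_on_eq[OF Node.prems \<open>x \<in> ?S\<close> MinMax(1)]
      strict_mono_on_eq[OF Node.prems \<open>x \<in> ?S\<close> MinMax(2)]
      mem Node.IH(1)[OF mono(1)] Node.IH(2)[OF mono(2)]
    by simp
qed simp

lemma hr_tree_map_tree:
  assumes "strict_mono_on (set_tree t) f" "hr_tree t"
  shows "hr_tree (map_tree f t)"
proof -
  have "distinct (inorder (map_tree f t))"
    using assms strict_mono_on_imp_inj_on[OF assms(1)]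
    by (simp add: inorder_map distinct_map hr_tree_def minmax_tree_def)
  then show ?thesis
    using assms minmax_nodes_map_tree hr_nodes_map_tree
    by (simp add: hr_tree_def minmax_tree_def)
qed

section \<open>The modified HR-action\<close>

lemma relabel_node_eq:
  assumes hr: "hr_tree (Node l y r)" and r: "r \<noteq> Leaf"
  defines "S \<equiv> set_tree (Node l y r)"
  obtains g where
    "relabel_node l y r = Node l (if y = Min S then Max S else Min S) (map_tree g r)"
    "strict_mono_on (set_tree r) g"
    "g ` set_tree r = insert y (set_tree r) - {if y = Min S then Max S else Min S}"
proof -
  define R where "R = insert y (set_tree r)"
  define y' where "y' = (if y = Min S then Max R else Min R)"
  have "R \<subseteq> S" "finite S" "finite R" "R \<noteq> {}"
    by (auto simp: R_def S_def)
  moreover have "y = Min S \<Longrightarrow> Max S \<in> R" "y \<noteq> Min S \<Longrightarrow> Min S \<in> R"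
    using hr r unfolding hr_tree_Node_iff R_def S_def by auto
  ultimately have y': "y' = (if y = Min S then Max S else Min S)"
    unfolding y'_def by (metis Max_mono Max_ge Min_antimono Min_le order.antisym)
  have "y \<notin> set_tree r"
    using hr by (simp add: hr_tree_Node_iff)
  moreover have "y' \<in> R"
    using \<open>finite R\<close> \<open>R \<noteq> {}\<close> by (simp add: y'_def)
  ultimately have "card (set_tree r) = card (R - {y'})"
    by (simp add: R_def)
  then have "strict_mono_on (set_tree r) (\<lambda>a. sorted_list_of_set (R - {y'}) ! rank (set_tree r) a)"
    "(\<lambda>a. sorted_list_of_set (R - {y'}) ! rank (set_tree r) a) ` set_tree r = R - {y'}"
    using rank_relabel[of "set_tree r" "R - {y'}"] \<open>finite R\<close> by simp_all
  moreover have "relabel_node l y r =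
      Node l y' (map_tree (\<lambda>a. sorted_list_of_set (R - {y'}) ! rank (set_tree r) a) r)"
    unfolding relabel_node_def rank_def Let_def R_def y'_def S_def ..
  ultimately show ?thesis
    using that y' unfolding R_def by blast
qed

lemma Min_neq_Max_set_tree:
  assumes "hr_tree (Node l y r)" "r \<noteq> Leaf"
  shows "Min (set_tree (Node l y r)) \<noteq> Max (set_tree (Node l y r))"
proof -
  obtain a where "a \<in> set_tree r"
    using assms(2) by (cases r) auto
  moreover have "y \<notin> set_tree r"
    using assms(1) by (simp add: hr_tree_Node_iff)
  ultimately show ?thesis
    by (metis Max_ge Min_le finite_set_tree order.antisym tree.set_intros(2,3))
qed

lemma relabel_node_facts:
  assumes hr: "hr_tree (Node l y r)" and r: "r \<noteq> Leaf"
  shows "set_tree (relabel_node l y r) = set_tree (Node l y r)"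
    and "hr_tree (relabel_node l y r)"
    and "type_tree (relabel_node l y r) =
           Node (type_tree l) (y \<noteq> Min (set_tree (Node l y r))) (type_tree r)"
    and "left_ranks (relabel_node l y r) = left_ranks (Node l y r)"
proof -
  define S where "S = set_tree (Node l y r)"
  define y' where "y' = (if y = Min S then Max S else Min S)"
  obtain g where g: "relabel_node l y r = Node l y' (map_tree g r)"
    "strict_mono_on (set_tree r) g" "g ` set_tree r = insert y (set_tree r) - {y'}"
    using relabel_node_eq[OF hr r] unfolding S_def y'_def by blast
  have hr_parts: "hr_tree l" "hr_tree r" "y \<notin> set_tree l" "set_tree l \<inter> set_tree r = {}"
    "y = Min S \<or> y = Max S" "y = Min S \<Longrightarrow> Max S \<in> set_tree r" "y = Max S \<Longrightarrow> Min S \<in> set_tree r"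
    using hr r unfolding hr_tree_Node_iff S_def by auto
  have MinMax: "Min S \<noteq> Max S"
    using Min_neq_Max_set_tree[OF hr r] by (simp add: S_def)
  have y'_in: "y' \<in> insert y (set_tree r)"
    using hr_parts by (auto simp: y'_def)
  show set_eq: "set_tree (relabel_node l y r) = set_tree (Node l y r)"
    using g(1,3) y'_in by (auto simp: tree.set_map)
  have new_Min: "y' = Min S \<longleftrightarrow> y \<noteq> Min S"
    using MinMax by (auto simp: y'_def)
  have "hr_tree (Node l y' (map_tree g r))"
    unfolding hr_tree_Node_iff
    using set_eq g hr_parts y'_in MinMax hr_tree_map_tree[OF g(2) hr_parts(2)] r
    by (auto simp: tree.set_map S_def y'_def simp del: tree.set)
  then show "hr_tree (relabel_node l y r)"
    using g(1) by simp
  show "type_tree (relabel_node l y r) =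
      Node (type_tree l) (y \<noteq> Min (set_tree (Node l y r))) (type_tree r)"
    using g(1) set_eq new_Min type_tree_map_tree[OF g(2)] by (simp add: S_def del: tree.set)
  show "left_ranks (relabel_node l y r) = left_ranks (Node l y r)"
    using g(1) set_eq left_ranks_map_tree[OF g(2)] by (simp del: tree.set)
qed

lemma relabel_node_Node: "\<exists>y' r'. relabel_node l y r = Node l y' r'"
  by (simp add: relabel_node_def Let_def)

lemma shape_psi_at [simp]: "shape (psi_at z t) = shape t"
  by (induction t) (auto simp: relabel_node_def Let_def)

lemma psi_at_notin: "z \<notin> set_tree t \<Longrightarrow> psi_at z t = t"
  by (induction t) auto

lemma psi_at_relabel:
  "\<not> (l = Leaf \<and> r = Leaf) \<Longrightarrow> l \<noteq> Node Leaf 0 Leaf \<Longrightarrow> r \<noteq> Node Leaf 0 Leaf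
   \<Longrightarrow> psi_at y (Node l y r) = relabel_node l y r"
  by auto

lemma psi_at_preserves:
  "hr_tree t \<Longrightarrow>
     hr_tree (psi_at z t) \<and> set_tree (psi_at z t) = set_tree t \<and> left_ranks (psi_at z t) = left_ranks t"
proof (induction t)
  case (Node l y r)
  consider (relabel) "y = z" "\<not> ((l = Leaf \<and> r = Leaf) \<or> l = Node Leaf 0 Leaf \<or> r = Node Leaf 0 Leaf)"
    | (fixed) "y = z" "(l = Leaf \<and> r = Leaf) \<or> l = Node Leaf 0 Leaf \<or> r = Node Leaf 0 Leaf"
    | (below) "y \<noteq> z"
    by blast
  then show ?case
  proof cases
    case relabel
    then have "r \<noteq> Leaf"
      using Node.prems by (auto simp: hr_tree_Node_iff)
    then show ?thesis
      using relabel relabel_node_facts[OF Node.prems] by simp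
  next
    case fixed
    then show ?thesis
      using Node.prems by auto
  next
    case below
    have "psi_at z l = Leaf \<longleftrightarrow> l = Leaf" "psi_at z r = Leaf \<longleftrightarrow> r = Leaf"
      by (metis shape_eq_Leaf_iff shape_psi_at)+
    moreover have "hr_tree (psi_at z l)" "set_tree (psi_at z l) = set_tree l"
      "left_ranks (psi_at z l) = left_ranks l" "hr_tree (psi_at z r)"
      "set_tree (psi_at z r) = set_tree r" "left_ranks (psi_at z r) = left_ranks r"
      using Node by (simp_all add: hr_tree_Node_iff)
    ultimately show ?thesis
      using below Node.prems by (simp add: hr_tree_Node_iff) blast
  qed
qed simp

lemma hd_inorder_psi_at: "z \<noteq> hd (inorder t) \<Longrightarrow> hd (inorder (psi_at z t)) = hd (inorder t)"
proof (induction t)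
  case (Node l y r)
  have "psi_at z l = Leaf \<longleftrightarrow> l = Leaf"
    using shape_eq_Leaf_iff shape_psi_at by metis
  then show ?case
    using Node relabel_node_Node[of l y r] by (auto simp: hd_append)
qed simp

text \<open>The orbit is generated by acting at labels rather than at positions of the reading
  word; when \<open>0\<close> is the first letter, the labels \<open>\<pi>\<^sub>1, \<dots>, \<pi>\<^sub>n\<close> are the nonzero ones.\<close>

inductive_set orbit :: "int tree \<Rightarrow> int tree set" for t where
  refl: "t \<in> orbit t"
| step: "s \<in> orbit t \<Longrightarrow> z \<in> set_tree s \<Longrightarrow> z \<noteq> 0 \<Longrightarrow> psi_at z s \<in> orbit t"

lemma orbit_invariants:
  assumes "hr_tree t" "s \<in> orbit t"
  shows "hr_tree s \<and> set_tree s = set_tree t \<and> left_ranks s = left_ranks t \<and> shape s = shape t"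
  using assms(2) by induction (use assms(1) psi_at_preserves in auto)

lemma orbit_hd_inorder: "s \<in> orbit t \<Longrightarrow> hd (inorder t) = 0 \<Longrightarrow> hd (inorder s) = 0"
  by (induction rule: orbit.induct) (auto simp: hd_inorder_psi_at)

lemma orbit_trans: "u \<in> orbit s \<Longrightarrow> s \<in> orbit t \<Longrightarrow> u \<in> orbit t"
  by (induction rule: orbit.induct) (auto intro: orbit.step)

lemma orbit_fixpoint: "s \<in> orbit t \<Longrightarrow> (\<And>z. psi_at z t = t) \<Longrightarrow> s = t"
  by (induction rule: orbit.induct) auto

lemma orbit_Node_left:
  assumes hr: "hr_tree (Node l x r)" and "l' \<in> orbit l"
  shows "Node l' x r \<in> orbit (Node l x r)"
  using assms(2)
proof induction
  case (step s z)
  have "z \<noteq> x" "z \<notin> set_tree r"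
    using hr step(2) orbit_invariants[of l s] step(1) by (auto simp: hr_tree_Node_iff)
  then show ?case
    using orbit.step[OF step(4), of z] step(2,3) by (simp add: psi_at_notin)
qed (rule orbit.refl)

lemma orbit_Node_right:
  assumes hr: "hr_tree (Node l x r)" and "r' \<in> orbit r"
  shows "Node l x r' \<in> orbit (Node l x r)"
  using assms(2)
proof induction
  case (step s z)
  have "z \<noteq> x" "z \<notin> set_tree l"
    using hr step(2) orbit_invariants[of r s] step(1) by (auto simp: hr_tree_Node_iff)
  then show ?case
    using orbit.step[OF step(4), of z] step(2,3) by (simp add: psi_at_notin)
qed (rule orbit.refl)

lemma orbit_Node:
  "hr_tree (Node l x r) \<Longrightarrow> l' \<in> orbit l \<Longrightarrow> r' \<in> orbit r \<Longrightarrow> Node l' x r' \<in> orbit (Node l x r)"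
  by (meson orbit_Node_left orbit_Node_right orbit_trans orbit_invariants hr_tree_Node_iff)

lemma orbit_inorder:
  assumes "hr_tree T" "inorder T = 0 # \<pi>" "S \<in> orbit T"
  shows "inorder S = 0 # tl (inorder S)" "length (tl (inorder S)) = length \<pi>"
    "distinct (inorder S)"
proof -
  have inv: "hr_tree S" "shape S = shape T"
    using orbit_invariants[OF assms(1,3)] by auto
  then have length: "length (inorder S) = length (inorder T)"
    by (metis length_inorder shape_def size_map_tree)
  then have "inorder S \<noteq> []"
    using assms(2) by auto
  then show "inorder S = 0 # tl (inorder S)"
    using orbit_hd_inorder[OF assms(3)] assms(2) by (metis list.collapse list.sel(1))
  show "length (tl (inorder S)) = length \<pi>"
    using length assms(2) by simp
  show "distinct (inorder S)"
    using inv(1) by (simp add: hr_tree_def minmax_tree_def)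
qed

lemma orb_eq_orbit:
  assumes "hr_tree T" "inorder T = 0 # \<pi>" "length \<pi> = n"
  shows "orb n T = orbit T"
proof
  show "orb n T \<subseteq> orbit T"
  proof
    fix S assume "S \<in> orb n T"
    then show "S \<in> orbit T"
    proof induction
      case (step S i)
      let ?z = "tl (inorder S) ! (i - 1)"
      have "?z \<in> set (tl (inorder S))"
        using step(2) orbit_inorder[OF assms(1,2) step(3)] assms(3) by auto
      then have "?z \<in> set_tree S" "?z \<noteq> 0"
        using orbit_inorder[OF assms(1,2) step(3)] by (metis list.set_intros(2) set_inorder,
            metis distinct.simps(2))
      then show ?case
        unfolding psi_def using orbit.step[OF step(3)] by blast
    qed (rule orbit.refl)
  qed
next
  show "orbit T \<subseteq> orb n T"
  proof
    fix S assume "S \<in> orbit T"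
    then show "S \<in> orb n T"
    proof induction
      case (step S z)
      have "z \<in> set (tl (inorder S))"
        using step(2,3) orbit_inorder(1)[OF assms(1,2) step(1)] by (metis set_ConsD set_inorder)
      then obtain j where "j < n" "tl (inorder S) ! j = z"
        using orbit_inorder(2)[OF assms(1,2) step(1)] assms(3) by (metis in_set_conv_nth)
      then show ?case
        using orb.step[OF step(4), of "Suc j"] by (simp add: psi_def)
    qed (rule orb.base)
  qed
qed

section \<open>Tight trees in the orbit\<close>

lemma orbit_type_tree:
  assumes "hr_tree T" "S \<in> orbit T"
  shows "wf_types (type_tree S)" "shape (type_tree S) = shape T"
  using orbit_invariants[OF assms] wf_types_type_tree by auto

lemma orbit_type_tree_Node:
  assumes hr: "hr_tree (Node l x r)" and l': "l' \<in> orbit l" and r': "r' \<in> orbit r"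
    and toggle: "m \<noteq> (x = Min (set_tree (Node l x r))) \<Longrightarrow>
      x \<noteq> 0 \<and> r \<noteq> Leaf \<and> l \<noteq> Node Leaf 0 Leaf \<and> r \<noteq> Node Leaf 0 Leaf"
  shows "\<exists>t' \<in> orbit (Node l x r). type_tree t' = Node (type_tree l') m (type_tree r')"
proof -
  have "hr_tree l" "hr_tree r"
    using hr by (simp_all add: hr_tree_Node_iff)
  then have inv: "set_tree l' = set_tree l" "shape l' = shape l"
    "set_tree r' = set_tree r" "shape r' = shape r"
    using l' r' orbit_invariants by blast+
  have t': "Node l' x r' \<in> orbit (Node l x r)"
    using orbit_Node[OF hr l' r'] .
  have root: "(x = Min (set_tree (Node l' x r'))) = (x = Min (set_tree (Node l x r)))"
    using inv by simp
  show ?thesis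
  proof (cases "m = (x = Min (set_tree (Node l x r)))")
    case True
    then show ?thesis
      using t' root by (intro bexI[of _ "Node l' x r'"]) (simp_all del: tree.set)
  next
    case False
    have same_single: "s' = Node Leaf 0 Leaf \<Longrightarrow> s = Node Leaf 0 Leaf"
      if "set_tree s' = set_tree s" "shape s' = shape s" for s s' :: "int tree"
      using that by (cases s) auto
    have r'_Leaf: "r' \<noteq> Leaf"
      using toggle[OF False] inv by auto
    have "l' \<noteq> Node Leaf 0 Leaf" "r' \<noteq> Node Leaf 0 Leaf"
      using toggle[OF False] inv same_single[of r' r] same_single[of l' l] by auto
    then have "relabel_node l' x r' \<in> orbit (Node l x r)"
      using orbit.step[OF t', of x] toggle[OF False] r'_Leaf psi_at_relabel[of l' r' x] by simp
    moreover have "type_tree (relabel_node l' x r') = Node (type_tree l') m (type_tree r')"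
      using relabel_node_facts(3)[OF orbit_invariants[OF hr t', THEN conjunct1] r'_Leaf] False root
      by simp
    ultimately show ?thesis ..
  qed
qed

lemma hr_tree_zero_first:
  assumes "hr_tree (Node l x r)" "0 \<in> set_tree (Node l x r) \<Longrightarrow> hd (inorder (Node l x r)) = 0"
  shows "0 \<notin> set_tree r" "0 \<in> set_tree l \<Longrightarrow> hd (inorder l) = 0" "x = 0 \<Longrightarrow> l = Leaf"
proof -
  have "l \<noteq> Leaf \<Longrightarrow> hd (inorder l) \<in> set_tree l"
    using hd_in_set[of "inorder l"] by simp
  then show "0 \<notin> set_tree r" "0 \<in> set_tree l \<Longrightarrow> hd (inorder l) = 0" "x = 0 \<Longrightarrow> l = Leaf"
    using assms by (auto simp: hr_tree_Node_iff hd_append split: if_splits)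
qed

text \<open>The root type is chosen to continue the word of the tightened left subtree without a
  change. The action at the root, which flips this type, is blocked only when \<open>0\<close> is the root
  or its left leaf, and then the prescribed first direction already forces the right type.\<close>

lemma exists_tight_in_orbit_Node:
  assumes hr: "hr_tree (Node l x r)" and r: "r \<noteq> Leaf"
    and zero: "0 \<in> set_tree (Node l x r) \<Longrightarrow>
      hd (inorder (Node l x r)) = 0 \<and> starts_with s (tdirs (type_tree (Node l x r)))"
    and l1: "l1 \<in> orbit l" "l \<noteq> Leaf \<Longrightarrow> tight (type_tree l1) \<and> starts_with s (tdirs (type_tree l1))"
    and tighten_r: "\<And>b. \<exists>r1 \<in> orbit r. tight (type_tree r1) \<and> starts_with b (tdirs (type_tree r1))"
  shows "\<exists>t' \<in> orbit (Node l x r). tight (type_tree t') \<and> starts_with s (tdirs (type_tree t'))"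
proof -
  let ?m = "x = Min (set_tree (Node l x r))"
  have type_t: "type_tree (Node l x r) = Node (type_tree l) ?m (type_tree r)"
    and type_r: "type_tree r \<noteq> Leaf"
    using r by simp_all
  have "0 \<in> set_tree (Node l x r) \<Longrightarrow> hd (inorder (Node l x r)) = 0"
    using zero by blast
  note zero_first = hr_tree_zero_first[OF hr this]
  define m where "m = tight_root_type (type_tree l1) s"
  obtain r1 where r1: "r1 \<in> orbit r" "tight (type_tree r1)" "starts_with m (tdirs (type_tree r1))"
    using tighten_r by blast
  have "m = ?m" if "x = 0 \<or> l = Node Leaf 0 Leaf"
  proof -
    have "0 \<in> set_tree (Node l x r)" "l = Leaf \<or> l = Node Leaf 0 Leaf"
      using that zero_first(3) by auto
    moreover from this have "l1 = l"
      using orbit_fixpoint[OF l1(1)] by auto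
    ultimately have "starts_with s (tdirs (Node (type_tree l) ?m (type_tree r)))"
      "type_tree l = Leaf \<or> tdirs (type_tree l) = []"
      using zero type_t by auto
    then show ?thesis
      using tight_root_type_forced[OF type_r] \<open>l1 = l\<close> m_def by blast
  qed
  then obtain t' where t': "t' \<in> orbit (Node l x r)"
    "type_tree t' = Node (type_tree l1) m (type_tree r1)"
    using orbit_type_tree_Node[OF hr l1(1) r1(1), of m] r zero_first(1) by fastforce
  have "hr_tree l" "hr_tree r"
    using hr by (simp_all add: hr_tree_Node_iff)
  then have "type_tree l1 = Leaf \<longleftrightarrow> l = Leaf" "type_tree r1 \<noteq> Leaf"
    using orbit_type_tree(2) l1(1) r1(1) r by (metis shape_eq_Leaf_iff shape_type_tree)+
  moreover have "wf_types (Node (type_tree l1) m (type_tree r1))"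
    using orbit_type_tree(1)[OF hr t'(1)] t'(2) by simp
  ultimately show ?thesis
    using tight_Node_starts_with_iff l1 r1 t' m_def by metis
qed

lemma exists_tight_in_orbit:
  assumes "hr_tree t" "t \<noteq> Leaf"
    and "0 \<in> set_tree t \<Longrightarrow> hd (inorder t) = 0 \<and> starts_with s (tdirs (type_tree t))"
  shows "\<exists>t' \<in> orbit t. tight (type_tree t') \<and> starts_with s (tdirs (type_tree t'))"
  using assms
proof (induction t arbitrary: s)
  case (Node l x r)
  have hr: "hr_tree l" "hr_tree r" "r = Leaf \<Longrightarrow> l = Leaf"
    using Node.prems(1) by (auto simp: hr_tree_Node_iff)
  have "0 \<in> set_tree (Node l x r) \<Longrightarrow> hd (inorder (Node l x r)) = 0"
    using Node.prems(3) by blast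
  note zero_first = hr_tree_zero_first[OF Node.prems(1) this]
  show ?case
  proof (cases "r = Leaf")
    case True
    then show ?thesis
      using hr(3) by (intro bexI[OF _ orbit.refl]) (simp add: tight_single starts_with_def)
  next
    case r: False
    obtain l1 where "l1 \<in> orbit l" "l \<noteq> Leaf \<Longrightarrow> tight (type_tree l1) \<and> starts_with s (tdirs (type_tree l1))"
    proof (cases "l = Leaf")
      case False
      have "0 \<in> set_tree l \<Longrightarrow> starts_with s (tdirs (type_tree l))"
        using Node.prems(3) starts_with_tdirs_left[of "type_tree r"] r
        by (metis tree.set_intros(1) type_tree.simps(2) type_tree_eq_Leaf_iff)
      then show ?thesis
        using Node.IH(1)[OF hr(1) False] zero_first(2) that by blast
    qed (use orbit.refl in blast)
    then show ?thesis
      using exists_tight_in_orbit_Node[OF Node.prems(1) r Node.prems(3)] Node.IH(2)[OF hr(2) r]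
        zero_first(1) by blast
  qed
qed simp

lemma tight_in_orbit_unique:
  assumes T: "hr_tree T" and S: "S \<in> orbit T" "tight (type_tree S)" "starts_with b (tdirs (type_tree S))"
    and S': "S' \<in> orbit T" "tight (type_tree S')" "starts_with b (tdirs (type_tree S'))"
  shows "S' = S"
proof -
  have "type_tree S' = type_tree S"
    using tight_unique orbit_type_tree[OF T S(1)] orbit_type_tree[OF T S'(1)] S S' by metis
  then show ?thesis
    using hr_tree_eqI[of S' S] orbit_invariants[OF T S'(1)] orbit_invariants[OF T S(1)] by simp
qed

lemma orbit_runB:
  assumes T: "hr_tree T" "inorder T = 0 # \<pi>" "\<pi> \<noteq> []" and S: "S \<in> orbit T"
  shows "leaf_count T \<le> runB (tl (inorder S))"
    and "runB (tl (inorder S)) = leaf_count T \<longleftrightarrow> tight (type_tree S)"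
    and "starts_with b (tdirs (type_tree S)) \<longleftrightarrow> b = (0 < tl (inorder S) ! 0)"
proof -
  note word = orbit_inorder[OF T(1,2) S]
  note types = orbit_type_tree[OF T(1) S]
  have dirs: "dirs (0 # tl (inorder S)) = tdirs (type_tree S)"
    using dirs_inorder orbit_invariants[OF T(1) S] word(1) by metis
  have run: "runB (tl (inorder S)) = changes (tdirs (type_tree S)) + 1"
    using runB_eq_changes word(1,3) dirs by metis
  have leaves: "leaf_count (type_tree S) = leaf_count T"
    using leaf_count_shape_eq types(2) by metis
  have "type_tree S \<noteq> Leaf"
    using types(2) T(2) by (metis shape_eq_Leaf_iff inorder.simps(1) list.distinct(1))
  then show "leaf_count T \<le> runB (tl (inorder S))"
    using leaf_count_le_changes[OF types(1)] run leaves by simp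
  show "runB (tl (inorder S)) = leaf_count T \<longleftrightarrow> tight (type_tree S)"
    using run leaves by (simp add: tight_def)
  show "starts_with b (tdirs (type_tree S)) \<longleftrightarrow> b = (0 < tl (inorder S) ! 0)"
    using starts_with_dirs_zero_Cons word(2) T(3) dirs by (metis length_0_conv)
qed

theorem mainTheorem10:
  fixes n :: nat and \<pi> :: "int list" and T :: "int tree"
  assumes "n \<ge> 1"
    and "signed_perm n \<pi>"
    and "hr_tree T"
    and "inorder T = 0 # \<pi>"
  shows "(\<forall>S \<in> orb n T. runB (tl (inorder S)) \<ge> leaf_count T)
         \<and> (\<exists>!S. S \<in> orb n T \<and> (0 < tl (inorder S) ! 0 \<longleftrightarrow> 0 < \<pi> ! 0)
                 \<and> runB (tl (inorder S)) = leaf_count T)"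
proof -
  have "length \<pi> = n"
    using assms(2) distinct_card[of "map abs \<pi>"] by (simp add: signed_perm_def)
  then have orb: "orb n T = orbit T" and "\<pi> \<noteq> []"
    using orb_eq_orbit[OF assms(3,4)] assms(1) by auto
  let ?s = "0 < \<pi> ! 0"
  note run = orbit_runB[OF assms(3,4) \<open>\<pi> \<noteq> []\<close>]
  have "T \<noteq> Leaf" "hd (inorder T) = 0"
    using assms(4) by auto
  moreover have "starts_with ?s (tdirs (type_tree T))"
    using run(3)[OF orbit.refl, of ?s] assms(4) by simp
  ultimately obtain S where S: "S \<in> orbit T" "tight (type_tree S)" "starts_with ?s (tdirs (type_tree S))"
    using exists_tight_in_orbit[OF assms(3), of ?s] by blast
  have optimal: "(0 < tl (inorder S') ! 0 \<longleftrightarrow> ?s) \<and> runB (tl (inorder S')) = leaf_count T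
      \<longleftrightarrow> tight (type_tree S') \<and> starts_with ?s (tdirs (type_tree S'))" if "S' \<in> orbit T" for S'
    using run(2)[OF that] run(3)[OF that, of ?s] by auto
  show ?thesis
    unfolding orb
    by (intro conjI ballI ex1I[of _ S]) (use run(1) optimal S tight_in_orbit_unique[OF assms(3) S] in blast)+
qed

end
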